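(* Fermionic setting. Given $M_1,M_2\in\mathrm{SO}(2N,\mathbb{R})$, there exists a compatible complex structure $\tilde J$ such that, with all quantities computed with respect to $\tilde J$, the circle function $\tilde\varphi$ is defined at $M_1$, $M_2$ and $M_1M_2$, and the cocycle $\tilde\eta(M_1,M_2)$ is defined.
   Context: A compatible complex structure is a real orthogonal $2N\times2N$ matrix $\tilde J$ with $\tilde J^2=-\mathbb{1}$. With respect to $\tilde J$: $\tilde C_M=\frac12(M-\tilde JM\tilde J)$, $\tilde D_M=\frac12(M+\tilde JM\tilde J)$, $\tilde Z_M=\tilde C_M^{-1}\tilde D_M$; for $A$ commuting with $\tilde J$, written $\begin{pmatrix}A_1&A_2\\-A_2&A_1\end{pmatrix}$ in an orthonormal basis in which $\tilde J=\begin{pmatrix}0&\mathbb{1}\\-\mathbb{1}&0\end{pmatrix}$, $\overline A=A_1+\mathrm{i}A_2$ and $\overline{\det}(A)=\det\overline A$. The circle function $\tilde\varphi(M)=\overline{\det}(\tilde C_M)/|\overline{\det}(\tilde C_M)|$ is defined when $\overline{\det}(\tilde C_M)\ne0$ (equivalently $\det(\mathbb{1}+\tilde\Delta_M)\neq 0$ with $\tilde\Delta_M=-M\tilde JM^{-1}\tilde J$). The cocycle $\tilde\eta(M_1,M_2)=\sum_i\arg\lambda_i$, $\lambda_i$ the eigenvalues of $\overline{\mathbb{1}-\tilde Z_{M_1}\tilde Z_{M_2^{-1}}}$, $\arg\in(-\pi,\pi]$, is defined when $\tilde C_{M_1}$, $\tilde C_{M_2^{-1}}$ and $\mathbb{1}-\tilde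 Z_{M_1}\tilde Z_{M_2^{-1}}$ are invertible. *)

theory Defs
  imports "HOL-Analysis.Analysis"
begin

text \<open>Real 2N x 2N matrices are indexed by the type 'n + 'n (N = CARD('n)).
  The first copy of 'n indexes the first N basis vectors, the second copy the last N.\<close>

type_synonym 'n rmat = "real ^ ('n + 'n) ^ ('n + 'n)"

definition J0 :: "'n::finite rmat" where
  "J0 = (\<chi> i j. (case (i, j) of
                     (Inl a, Inr b) \<Rightarrow> (if a = b then 1 else 0)
                   | (Inr a, Inl b) \<Rightarrow> (if a = b then -1 else 0)
                   | _ \<Rightarrow> 0))"

definition SO :: "'n::finite rmat set" where
  "SO = {M. orthogonal_matrix M \<and> det M = 1}"

definition compat_cs :: "'n::finite rmat \<Rightarrow> bool" where
  "compat_cs J \<longleftrightarrow> orthogonal_matrix J \<and> J ** J = - mat 1"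

definition Cm :: "'n::finite rmat \<Rightarrow> 'n rmat \<Rightarrow> 'n rmat" where
  "Cm J M = (1/2) *\<^sub>R (M - J ** M ** J)"

definition Dm :: "'n::finite rmat \<Rightarrow> 'n rmat \<Rightarrow> 'n rmat" where
  "Dm J M = (1/2) *\<^sub>R (M + J ** M ** J)"

definition Zm :: "'n::finite rmat \<Rightarrow> 'n rmat \<Rightarrow> 'n rmat" where
  "Zm J M = matrix_inv (Cm J M) ** Dm J M"

definition std_basis :: "'n::finite rmat \<Rightarrow> 'n rmat" where
  "std_basis J = (SOME Q. orthogonal_matrix Q \<and> transpose Q ** J ** Q = J0)"

text \<open>For A commuting with J, written as [[A1, A2], [-A2, A1]] in that basis,
  bar A = A1 + i A2, and bar-det A = det (bar A).\<close>
definition cbar :: "'n::finite rmat \<Rightarrow> 'n rmat \<Rightarrow> complex ^ 'n ^ 'n" where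
  "cbar J A = (let Q = std_basis J; A' = transpose Q ** A ** Q in
     (\<chi> a b. complex_of_real (A' $ Inl a $ Inl b) + \<i> * complex_of_real (A' $ Inl a $ Inr b)))"

definition detbar :: "'n::finite rmat \<Rightarrow> 'n rmat \<Rightarrow> complex" where
  "detbar J A = det (cbar J A)"

definition circle_defined :: "'n::finite rmat \<Rightarrow> 'n rmat \<Rightarrow> bool" where
  "circle_defined J M \<longleftrightarrow> detbar J (Cm J M) \<noteq> 0"

definition circle_fun :: "'n::finite rmat \<Rightarrow> 'n rmat \<Rightarrow> complex" where
  "circle_fun J M = detbar J (Cm J M) / complex_of_real (cmod (detbar J (Cm J M)))"

definition cocycle_defined :: "'n::finite rmat \<Rightarrow> 'n rmat \<Rightarrow> 'n rmat \<Rightarrow> bool" where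
  "cocycle_defined J M1 M2 \<longleftrightarrow>
     invertible (Cm J M1) \<and> invertible (Cm J (matrix_inv M2)) \<and>
     invertible (mat 1 - Zm J M1 ** Zm J (matrix_inv M2))"

end

(*
  Every M in SO(2N) is conjugate, by some P in SO(2N), to a direct sum of plane rotations;
  then J = P J0 P^T commutes with M, and C_M = M is invertible with respect to J.
  For fixed M, along a path R(t) in SO(2N) whose entries extend to entire functions,
  det C_M with respect to R(t) J0 R(t)^T is a real-entire function of t.  Any two points of
  SO(2N) are joined by such a path (a one-parameter group through the normal form), so by the
  identity theorem finitely many nonempty "C_M invertible" conditions hold simultaneously;
  take M = M1, M2, M1 M2.  Invertibility of C_M gives bar-det(C_M) <> 0, because C_M commutes
  with J and a kernel vector of its complex form yields a kernel vector of C_M; and the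
  identity C_{M1} (1 - Z_{M1} Z_{M2^-1}) C_{M2} = C_{M1 M2} gives the cocycle condition.
*)

theory Submission
  imports Defs "HOL-Complex_Analysis.Conformal_Mappings"
begin


lemma sum_UNIV_Plus:
  fixes f :: "'a::finite + 'b::finite \<Rightarrow> 'c::comm_monoid_add"
  shows "(\<Sum>k\<in>UNIV. f k) = (\<Sum>a\<in>UNIV. f (Inl a)) + (\<Sum>b\<in>UNIV. f (Inr b))"
  using sum.Plus[of "UNIV::'a set" "UNIV::'b set" f] by (simp add: o_def)

lemma mat_eqI: "(\<And>i j. A $ i $ j = B $ i $ j) \<Longrightarrow> A = B"
  by (simp add: vec_eq_iff)

lemma matrix_add_rdistrib: "(A + B) ** C = A ** C + B ** (C::'a::semiring_1^_^_)"
  by (simp add: matrix_matrix_mult_def vec_eq_iff sum.distrib algebra_simps)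

lemma matrix_diff_ldistrib: "A ** (B - C) = A ** B - A ** (C::'a::ring_1^_^_)"
  by (simp add: matrix_matrix_mult_def vec_eq_iff sum_subtractf algebra_simps)

lemma matrix_diff_rdistrib: "(A - B) ** C = A ** C - B ** (C::'a::ring_1^_^_)"
  by (simp add: matrix_matrix_mult_def vec_eq_iff sum_subtractf algebra_simps)

lemma matrix_mul_uminus_left: "(- A) ** B = - (A ** (B::'a::ring_1^_^_))"
  by (simp add: matrix_matrix_mult_def vec_eq_iff sum_negf)

lemma matrix_mul_uminus_right: "A ** (- B) = - (A ** (B::'a::ring_1^_^_))"
  by (simp add: matrix_matrix_mult_def vec_eq_iff sum_negf)

lemma matrix_mul_scaleR_right: "A ** (k *\<^sub>R B) = k *\<^sub>R (A ** (B::real^_^_))"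
  by (simp add: matrix_scalar_ac scalar_matrix_assoc)

lemmas matrix_ring_simps = matrix_add_ldistrib matrix_add_rdistrib matrix_diff_ldistrib
  matrix_diff_rdistrib matrix_mul_uminus_left matrix_mul_uminus_right
  scalar_matrix_assoc[symmetric] matrix_mul_scaleR_right matrix_mul_assoc
  scaleR_right_diff_distrib scaleR_right_distrib

lemma transpose_add: "transpose (A + B) = transpose A + transpose (B::'a::semiring_1^_^_)"
  by (simp add: transpose_def vec_eq_iff)

lemma transpose_diff: "transpose (A - B) = transpose A - transpose (B::'a::ring_1^_^_)"
  by (simp add: transpose_def vec_eq_iff)

lemma matrix_inv_left_right:
  fixes A :: "'a::field^'n^'n"
  assumes "invertible A"
  shows "A ** matrix_inv A = mat 1" "matrix_inv A ** A = mat 1"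
  using someI_ex[OF assms[unfolded invertible_def]] unfolding matrix_inv_def by auto

lemma matrix_inv_unique:
  fixes A :: "'a::field^'n^'n"
  assumes "B ** A = mat 1"
  shows "matrix_inv A = B"
proof -
  have inv: "invertible A" using assms invertible_left_inverse by blast
  have "matrix_inv A = (B ** A) ** matrix_inv A" by (simp add: assms)
  also have "\<dots> = B" by (simp add: matrix_inv_left_right[OF inv] flip: matrix_mul_assoc)
  finally show ?thesis .
qed

lemma matrix_inv_orthogonal:
  fixes M :: "real^'n^'n"
  assumes "orthogonal_matrix M"
  shows "matrix_inv M = transpose M"
  using assms by (intro matrix_inv_unique) (simp add: orthogonal_matrix_def)

lemma invertible_iff_trivial_kernel:
  fixes A :: "'a::field^'n^'n"
  shows "invertible A \<longleftrightarrow> (\<forall>x. A *v x = 0 \<longrightarrow> x = 0)"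
  by (simp add: invertible_left_inverse matrix_left_invertible_ker)

lemma matrix_vector_mult_uminus_right: "A *v (- x) = - (A *v (x::'a::ring_1^_))"
  by (simp add: matrix_vector_mult_def vec_eq_iff sum_negf)


section \<open>Block rotations\<close>

definition block_rot :: "('n::finite \<Rightarrow> real) \<Rightarrow> ('n \<Rightarrow> real) \<Rightarrow> 'n rmat" where
  "block_rot c s = (\<chi> i j. case (i, j) of
      (Inl a, Inl b) \<Rightarrow> if a = b then c a else 0
    | (Inl a, Inr b) \<Rightarrow> if a = b then s a else 0
    | (Inr a, Inl b) \<Rightarrow> if a = b then - s a else 0
    | (Inr a, Inr b) \<Rightarrow> if a = b then c a else 0)"

lemma block_rot_nth [simp]:
  "block_rot c s $ Inl a $ Inl b = (if a = b then c a else 0)"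
  "block_rot c s $ Inl a $ Inr b = (if a = b then s a else 0)"
  "block_rot c s $ Inr a $ Inl b = (if a = b then - s a else 0)"
  "block_rot c s $ Inr a $ Inr b = (if a = b then c a else 0)"
  by (simp_all add: block_rot_def)

lemma J0_eq_block_rot: "J0 = block_rot (\<lambda>_. 0) (\<lambda>_. 1)"
  by (rule mat_eqI) (auto simp: J0_def split: sum.splits)

lemma block_rot_mult:
  "block_rot c s ** block_rot c' s' =
     block_rot (\<lambda>a. c a * c' a - s a * s' a) (\<lambda>a. c a * s' a + s a * c' a)"
  by (rule mat_eqI, case_tac i; case_tac j)
     (simp_all add: matrix_matrix_mult_def sum_UNIV_Plus if_distrib if_distribR cong: if_cong)

lemma block_rot_commute: "block_rot c s ** block_rot c' s' = block_rot c' s' ** block_rot c s"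
  unfolding block_rot_mult by (simp add: algebra_simps)

lemma transpose_block_rot: "transpose (block_rot c s) = block_rot c (\<lambda>a. - s a)"
  by (rule mat_eqI, case_tac i; case_tac j) (simp_all add: transpose_def)

lemma block_rot_id: "block_rot (\<lambda>_. 1) (\<lambda>_. 0) = mat 1"
  by (rule mat_eqI, case_tac i; case_tac j) (simp_all add: mat_def)

lemma orthogonal_block_rot:
  assumes "\<And>a. (c a)\<^sup>2 + (s a)\<^sup>2 = 1"
  shows "orthogonal_matrix (block_rot c s)"
proof -
  have "transpose (block_rot c s) ** block_rot c s = block_rot (\<lambda>_. 1) (\<lambda>_. 0)"
    unfolding transpose_block_rot block_rot_mult
    using assms by (simp add: power2_eq_square algebra_simps)
  then show ?thesis by (simp add: orthogonal_matrix block_rot_id)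
qed

text \<open>Each plane rotation is the square of the rotation by half its angle.\<close>
lemma det_block_rot:
  assumes "\<And>a. (c a)\<^sup>2 + (s a)\<^sup>2 = 1"
  shows "det (block_rot c s) = 1"
proof -
  have "\<exists>t. c a = cos t \<and> s a = sin t" for a
    using sincos_total_2pi[of "c a" "s a"] assms[of a] by metis
  then obtain t where t: "\<And>a. c a = cos (t a) \<and> s a = sin (t a)" by metis
  let ?R = "block_rot (\<lambda>a. cos (t a / 2)) (\<lambda>a. sin (t a / 2))"
  have "?R ** ?R = block_rot c s"
    unfolding block_rot_mult
  proof (intro arg_cong2[where f = block_rot] ext)
    fix a
    show "cos (t a / 2) * cos (t a / 2) - sin (t a / 2) * sin (t a / 2) = c a"
      "cos (t a / 2) * sin (t a / 2) + sin (t a / 2) * cos (t a / 2) = s a"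
      using t[of a] cos_double[of "t a / 2"] sin_double[of "t a / 2"] by (simp_all add: power2_eq_square)
  qed
  then have "det (block_rot c s) = det ?R * det ?R" by (metis det_mul)
  moreover have "det ?R = 1 \<or> det ?R = -1"
    by (rule det_orthogonal_matrix, rule orthogonal_block_rot) simp
  ultimately show ?thesis by auto
qed

lemma J0_squared: "J0 ** J0 = - mat 1"
proof -
  have "J0 ** J0 = block_rot (\<lambda>_. -1) (\<lambda>_. 0)" by (simp add: J0_eq_block_rot block_rot_mult)
  also have "\<dots> = - mat 1" by (rule mat_eqI, case_tac i; case_tac j) (simp_all add: mat_def)
  finally show ?thesis .
qed

lemma orthogonal_J0: "orthogonal_matrix J0"
  unfolding J0_eq_block_rot by (rule orthogonal_block_rot) simp

definition diag_Inr :: "('n::finite \<Rightarrow> real) \<Rightarrow> 'n rmat" where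
  "diag_Inr q = (\<chi> i j. if i = j then (case j of Inl a \<Rightarrow> 1 | Inr a \<Rightarrow> q a) else 0)"

lemma diag_Inr_mult_right:
  "(A ** diag_Inr q) $ i $ Inl b = A $ i $ Inl b" "(A ** diag_Inr q) $ i $ Inr b = A $ i $ Inr b * q b"
  by (simp_all add: diag_Inr_def matrix_matrix_mult_def if_distrib if_distribR cong: if_cong)

lemma diag_Inr_mult_left:
  "(diag_Inr q ** A) $ Inl a $ j = A $ Inl a $ j" "(diag_Inr q ** A) $ Inr a $ j = q a * A $ Inr a $ j"
  by (simp_all add: diag_Inr_def matrix_matrix_mult_def if_distrib if_distribR cong: if_cong)

lemma diag_Inr_one: "diag_Inr (\<lambda>_. 1) = mat 1"
  by (rule mat_eqI) (simp add: diag_Inr_def mat_def split: sum.splits)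

lemma transpose_diag_Inr: "transpose (diag_Inr q) = diag_Inr q"
  by (rule mat_eqI) (simp add: diag_Inr_def transpose_def)

lemma det_diag_Inr:
  fixes q :: "'n::finite \<Rightarrow> real"
  shows "det (diag_Inr q) = (\<Prod>a\<in>UNIV. q a)"
proof -
  have "det (diag_Inr q) = (\<Prod>k\<in>UNIV. diag_Inr q $ k $ k)"
    by (rule det_diagonal) (simp add: diag_Inr_def)
  also have "\<dots> = (\<Prod>a\<in>UNIV. q a)"
    using prod.Plus[of "UNIV::'n set" "UNIV::'n set" "\<lambda>k. diag_Inr q $ k $ k"]
    by (simp add: o_def diag_Inr_def)
  finally show ?thesis .
qed

lemma diag_Inr_mult: "diag_Inr p ** diag_Inr q = diag_Inr (\<lambda>a. p a * q a)"
  by (rule mat_eqI, case_tac i; case_tac j; simp only: diag_Inr_mult_left; simp add: diag_Inr_def)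

lemma orthogonal_diag_Inr:
  assumes "\<And>a. (q a)\<^sup>2 = 1"
  shows "orthogonal_matrix (diag_Inr q)"
  using assms unfolding orthogonal_matrix transpose_diag_Inr diag_Inr_mult
  by (simp add: power2_eq_square diag_Inr_one)

lemma diag_Inr_conj_block_rot:
  assumes "\<And>a. (q a)\<^sup>2 = 1"
  shows "diag_Inr q ** block_rot c s ** diag_Inr q = block_rot c (\<lambda>a. q a * s a)"
  using assms
  by (intro mat_eqI, case_tac i; case_tac j)
     (simp_all add: diag_Inr_mult_left diag_Inr_mult_right power2_eq_square)


section \<open>Complex structures conjugate to J0\<close>

definition rotated_J0 :: "'n::finite rmat \<Rightarrow> 'n rmat" where
  "rotated_J0 R = R ** J0 ** transpose R"

lemma compat_cs_rotated_J0:
  assumes "orthogonal_matrix R"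
  shows "compat_cs (rotated_J0 R)"
proof -
  have RR: "transpose R ** R = mat 1" "R ** transpose R = mat 1"
    using assms by (auto simp: orthogonal_matrix_def)
  have "rotated_J0 R ** rotated_J0 R = R ** (J0 ** (transpose R ** R) ** J0) ** transpose R"
    by (simp add: rotated_J0_def matrix_mul_assoc)
  also have "\<dots> = - mat 1"
    by (simp add: RR J0_squared matrix_mul_uminus_left matrix_mul_uminus_right)
  finally show ?thesis
    unfolding compat_cs_def rotated_J0_def
    using assms orthogonal_J0 by (auto intro!: orthogonal_matrix_mul)
qed

lemma rotated_J0_exists_std_basis:
  assumes "orthogonal_matrix R"
  shows "\<exists>Q. orthogonal_matrix Q \<and> transpose Q ** rotated_J0 R ** Q = J0"
proof -
  have "transpose R ** rotated_J0 R ** R = (transpose R ** R) ** J0 ** (transpose R ** R)"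
    by (simp add: rotated_J0_def matrix_mul_assoc)
  then show ?thesis using assms by (auto simp: orthogonal_matrix_def)
qed

lemma compat_cs_square:
  assumes "compat_cs J"
  shows "J ** J = - mat 1" "X ** J ** J = - X"
  using assms unfolding compat_cs_def by (auto simp: matrix_ring_simps simp flip: matrix_mul_assoc)

lemma compat_cs_transpose:
  assumes "compat_cs J"
  shows "transpose J = - J"
proof -
  have o: "transpose J ** J = mat 1" using assms by (auto simp: compat_cs_def orthogonal_matrix_def)
  have "transpose J = - (transpose J ** (J ** J))"
    using compat_cs_square(1)[OF assms] by (simp add: matrix_mul_uminus_right)
  also have "\<dots> = - J" by (simp add: o matrix_mul_assoc)
  finally show ?thesis .
qed

lemma Cm_commute:
  assumes "compat_cs J"
  shows "J ** Cm J M = Cm J M ** J"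
  unfolding Cm_def by (simp add: matrix_ring_simps compat_cs_square[OF assms])

lemma Cm_eq_self_if_commute:
  assumes "compat_cs J" and "J ** M = M ** J"
  shows "Cm J M = M"
proof -
  have "J ** M ** J = M ** (J ** J)" by (simp add: assms(2) matrix_mul_assoc)
  also have "\<dots> = - M" by (simp add: compat_cs_square(1)[OF assms(1)] matrix_mul_uminus_right)
  finally have "J ** M ** J = - M" .
  then show ?thesis by (simp add: Cm_def scaleR_2[symmetric] flip: matrix_mul_assoc)
qed

lemma Cm_mult:
  assumes "compat_cs J"
  shows "Cm J (M1 ** M2) = Cm J M1 ** Cm J M2 + Dm J M1 ** Dm J M2"
  unfolding Cm_def Dm_def by (simp add: matrix_ring_simps compat_cs_square[OF assms])

lemma Cm_transpose:
  assumes "compat_cs J"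
  shows "transpose (Cm J M) = Cm J (transpose M)"
  unfolding Cm_def
  by (simp add: transpose_scalar matrix_transpose_mul compat_cs_transpose[OF assms]
      matrix_ring_simps transpose_diff)

lemma Dm_transpose:
  assumes "compat_cs J"
  shows "transpose (Dm J M) = Dm J (transpose M)"
  unfolding Dm_def
  by (simp add: transpose_scalar matrix_transpose_mul compat_cs_transpose[OF assms]
      matrix_ring_simps transpose_add)

lemma transpose_Dm_mult_Cm:
  assumes "compat_cs J" and "orthogonal_matrix M"
  shows "transpose (Dm J M) ** Cm J M = - (transpose (Cm J M) ** Dm J M)"
proof -
  have MM: "transpose M ** M = mat 1" using assms(2) by (simp add: orthogonal_matrix_def)
  have r: "X ** transpose M ** M = X" for X by (simp add: MM flip: matrix_mul_assoc)
  show ?thesis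
    unfolding Cm_transpose[OF assms(1)] Dm_transpose[OF assms(1)] unfolding Cm_def Dm_def
    by (simp add: matrix_ring_simps compat_cs_square[OF assms(1)] r MM algebra_simps)
qed


section \<open>The circle function and the cocycle\<close>
lemma Cm_mult_factorization:
  assumes J: "compat_cs J" and M2: "orthogonal_matrix M2"
    and C1: "invertible (Cm J M1)" and C2: "invertible (Cm J M2)"
  shows "Cm J M1 ** (mat 1 - Zm J M1 ** Zm J (matrix_inv M2)) ** Cm J M2 = Cm J (M1 ** M2)"
proof -
  let ?C1 = "Cm J M1" and ?C2 = "Cm J M2" and ?D1 = "Dm J M1" and ?D2 = "Dm J M2"
  have C2t: "invertible (transpose ?C2)" by (rule transpose_invertible[OF C2])
  have Z2: "Zm J (matrix_inv M2) = matrix_inv (transpose ?C2) ** transpose ?D2"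
    by (simp add: Zm_def matrix_inv_orthogonal[OF M2] Cm_transpose[OF J] Dm_transpose[OF J])
  have "?C1 ** (mat 1 - Zm J M1 ** Zm J (matrix_inv M2)) ** ?C2
      = ?C1 ** ?C2 - (?C1 ** matrix_inv ?C1) ** ?D1 ** matrix_inv (transpose ?C2) ** (transpose ?D2 ** ?C2)"
    unfolding Z2 by (simp add: Zm_def matrix_ring_simps)
  also have "\<dots> = ?C1 ** ?C2 + ?D1 ** (matrix_inv (transpose ?C2) ** transpose ?C2) ** ?D2"
    by (simp add: transpose_Dm_mult_Cm[OF J M2] matrix_inv_left_right(1)[OF C1] matrix_ring_simps)
  also have "\<dots> = Cm J (M1 ** M2)"
    by (simp add: matrix_inv_left_right(2)[OF C2t] Cm_mult[OF J])
  finally show ?thesis .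
qed

lemma cocycle_defined_if_Cm_invertible:
  assumes J: "compat_cs J" and M2: "orthogonal_matrix M2"
    and C1: "invertible (Cm J M1)" and C2: "invertible (Cm J M2)"
    and C12: "invertible (Cm J (M1 ** M2))"
  shows "cocycle_defined J M1 M2"
proof -
  let ?X = "mat 1 - Zm J M1 ** Zm J (matrix_inv M2)"
  have "det (Cm J M1) * det ?X * det (Cm J M2) \<noteq> 0"
    using C12 by (simp flip: Cm_mult_factorization[OF assms(1-4)] det_mul add: invertible_det_nz)
  then have "invertible ?X" by (simp add: invertible_det_nz)
  moreover have "invertible (Cm J (matrix_inv M2))"
    using C2 by (simp add: matrix_inv_orthogonal[OF M2] Cm_transpose[OF J, symmetric] transpose_invertible)
  ultimately show ?thesis using C1 by (simp add: cocycle_defined_def)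
qed

lemma J0_mult_nth:
  "(J0 ** X) $ Inl a $ j = X $ Inr a $ j" "(J0 ** X) $ Inr a $ j = - X $ Inl a $ j"
  "(X ** J0) $ i $ Inl b = - X $ i $ Inr b" "(X ** J0) $ i $ Inr b = X $ i $ Inl b"
  by (simp_all add: J0_eq_block_rot matrix_matrix_mult_def sum_UNIV_Plus if_distrib if_distribR
      cong: if_cong)

lemma J0_commute_blocks:
  assumes "J0 ** C = C ** J0"
  shows "C $ Inr a $ Inr b = C $ Inl a $ Inl b" "C $ Inr a $ Inl b = - C $ Inl a $ Inr b"
  using arg_cong[OF assms, of "\<lambda>X. X $ Inl a $ Inr b"] arg_cong[OF assms, of "\<lambda>X. X $ Inl a $ Inl b"]
  by (simp_all add: J0_mult_nth)

text \<open>A kernel vector z of A + iB gives the kernel vector (Re z, - Im z) of [[A, B], [- B, A]].\<close>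
lemma singular_if_complexification_singular:
  fixes C :: "'n::finite rmat"
  assumes comm: "J0 ** C = C ** J0"
    and sing: "det (\<chi> a b. complex_of_real (C $ Inl a $ Inl b) + \<i> * complex_of_real (C $ Inl a $ Inr b)) = 0"
  shows "\<not> invertible C"
proof -
  let ?B = "\<chi> a b. complex_of_real (C $ Inl a $ Inl b) + \<i> * complex_of_real (C $ Inl a $ Inr b)"
  obtain z where z0: "z \<noteq> 0" and Bz: "?B *v z = 0"
    using sing invertible_iff_trivial_kernel[of ?B] by (auto simp: invertible_det_nz)
  define u :: "real^('n+'n)" where "u = (\<chi> k. case k of Inl b \<Rightarrow> Re (z $ b) | Inr b \<Rightarrow> - Im (z $ b))"
  have u0: "u \<noteq> 0"
  proof
    assume "u = 0"
    then have "u $ Inl b = 0 \<and> u $ Inr b = 0" for b by simp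
    then have "Re (z $ b) = 0 \<and> Im (z $ b) = 0" for b by (simp add: u_def)
    then show False using z0 by (simp add: vec_eq_iff complex_eq_iff)
  qed
  have "(\<Sum>b\<in>UNIV. ?B $ a $ b * z $ b) = 0" for a
    using arg_cong[OF Bz, of "\<lambda>x. x $ a"] by (simp add: matrix_vector_mult_def)
  from arg_cong[OF this, of Re] arg_cong[OF this, of Im]
  have re: "(\<Sum>b\<in>UNIV. C $ Inl a $ Inl b * Re (z $ b) - C $ Inl a $ Inr b * Im (z $ b)) = 0"
    and im: "(\<Sum>b\<in>UNIV. C $ Inl a $ Inr b * Re (z $ b) + C $ Inl a $ Inl b * Im (z $ b)) = 0" for a
    by (simp_all add: Re_sum Im_sum add.commute)
  have "(C *v u) $ k = 0" for k
  proof (cases k)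
    case (Inl a)
    then show ?thesis using re[of a]
      by (simp add: matrix_vector_mult_def sum_UNIV_Plus u_def sum_subtractf[symmetric] sum_negf)
  next
    case (Inr a)
    have "(C *v u) $ k
        = - (\<Sum>b\<in>UNIV. C $ Inl a $ Inr b * Re (z $ b) + C $ Inl a $ Inl b * Im (z $ b))"
      using Inr by (simp add: matrix_vector_mult_def sum_UNIV_Plus u_def J0_commute_blocks[OF comm]
          sum.distrib[symmetric] sum_negf[symmetric])
    with im[of a] show ?thesis by simp
  qed
  then have "C *v u = 0" by (simp add: vec_eq_iff)
  with u0 show ?thesis using invertible_iff_trivial_kernel by blast
qed

lemma circle_defined_if_Cm_invertible:
  assumes std: "\<exists>Q. orthogonal_matrix Q \<and> transpose Q ** J ** Q = J0"
    and J: "compat_cs J" and C: "invertible (Cm J M)"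
  shows "circle_defined J M"
proof -
  define Q where "Q = std_basis J"
  have oQ: "orthogonal_matrix Q" and QJ: "transpose Q ** J ** Q = J0"
    using someI_ex[OF std] unfolding Q_def std_basis_def by auto
  have QQ: "Q ** transpose Q = mat 1" using oQ by (simp add: orthogonal_matrix_def)
  define C' where "C' = transpose Q ** Cm J M ** Q"
  have "J0 ** C' = transpose Q ** (J ** Cm J M) ** Q"
    unfolding C'_def QJ[symmetric] by (simp add: matrix_mul_assoc) (simp add: QQ flip: matrix_mul_assoc)
  also have "\<dots> = C' ** J0"
    unfolding C'_def QJ[symmetric] Cm_commute[OF J]
    by (simp add: matrix_mul_assoc) (simp add: QQ flip: matrix_mul_assoc)
  finally have comm: "J0 ** C' = C' ** J0" .
  have "invertible C'"
    using C det_orthogonal_matrix[OF oQ] by (auto simp: C'_def invertible_det_nz det_mul)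
  then show ?thesis
    using singular_if_complexification_singular[OF comm]
    by (auto simp: circle_defined_def detbar_def cbar_def Let_def C'_def Q_def)
qed


text \<open>The library rewrites transpose Q *v x to x v* Q; the invariance arguments below need the
  former shape.\<close>
declare transpose_matrix_vector [simp del]

lemma inner_matrix_vector_transpose: "(A *v x) \<bullet> y = x \<bullet> (transpose A *v (y::real^'n))"
  by (metis dot_lmul_matrix vector_transpose_matrix)

lemma orthogonal_matrix_vector_cancel:
  assumes "orthogonal_matrix Q"
  shows "transpose Q *v (Q *v x) = x" "Q *v (transpose Q *v x) = x"
  using assms by (simp_all add: matrix_vector_mul_assoc orthogonal_matrix_def)

lemma orthogonal_matrix_inner: "orthogonal_matrix Q \<Longrightarrow> (Q *v x) \<bullet> (Q *v y) = x \<bullet> (y::real^'n)"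
  by (simp add: inner_matrix_vector_transpose orthogonal_matrix_vector_cancel)

lemma orthogonal_complement_transpose_invariant:
  fixes A :: "real^'m^'m"
  assumes span: "\<And>x. x \<in> S \<Longrightarrow> A *v x \<in> span S" and y: "\<forall>x\<in>S. orthogonal x y"
  shows "\<forall>x\<in>S. orthogonal x (transpose A *v y)"
proof
  fix x assume "x \<in> S"
  have "orthogonal y (A *v x)"
    using orthogonal_to_span[OF span[OF \<open>x \<in> S\<close>]] y by (simp add: orthogonal_commute)
  then show "orthogonal x (transpose A *v y)"
    by (simp add: orthogonal_def inner_matrix_vector_transpose[symmetric] inner_commute)
qed

lemma dim_Un_le:
  fixes S T :: "'a::euclidean_space set"
  shows "dim (S \<union> T) \<le> dim S + dim T"
proof -
  obtain B1 where B1: "B1 \<subseteq> S" "independent B1" "S \<subseteq> span B1" "card B1 = dim S"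
    using basis_exists by blast
  obtain B2 where B2: "B2 \<subseteq> T" "independent B2" "T \<subseteq> span B2" "card B2 = dim T"
    using basis_exists by blast
  have "S \<union> T \<subseteq> span (B1 \<union> B2)" using B1(3) B2(3) span_mono[of B1] span_mono[of B2] by blast
  then have "dim (S \<union> T) \<le> card (B1 \<union> B2)"
    using B1(2) B2(2) by (intro dim_le_card) (simp_all add: finiteI_independent)
  also have "\<dots> \<le> dim S + dim T" using card_Un_le[of B1 B2] B1(4) B2(4) by simp
  finally show ?thesis .
qed

lemma subset_span_if_orthogonal_complement_trivial:
  fixes V W :: "'a::euclidean_space set"
  assumes V: "subspace V" and WV: "W \<subseteq> V" and triv: "{y \<in> V. \<forall>w\<in>W. orthogonal w y} \<subseteq> {0}"
  shows "V \<subseteq> span W"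
proof
  fix v assume "v \<in> V"
  obtain y z where y: "y \<in> span W" and z: "\<And>w. w \<in> span W \<Longrightarrow> orthogonal z w" and v: "v = y + z"
    using orthogonal_subspace_decomp_exists[of W v] by metis
  have "span W \<subseteq> V" using V WV by (intro span_minimal) auto
  then have "z \<in> V" using \<open>v \<in> V\<close> y V v by (metis add_diff_cancel_left' subspace_diff subsetD)
  moreover have "\<forall>w\<in>W. orthogonal w z" using z span_base orthogonal_commute by blast
  ultimately have "z = 0" using triv by blast
  then show "v \<in> span W" using v y by simp
qed

lemma orthonormal_pair_in_subspace:
  fixes W :: "'a::euclidean_space set"
  assumes W: "subspace W" and dim: "2 \<le> dim W"
  obtains u v where "u \<in> W" "v \<in> W" "u \<bullet> u = 1" "v \<bullet> v = 1" "u \<bullet> v = 0"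
proof -
  obtain OB where OB: "OB \<subseteq> W" "pairwise orthogonal OB" "\<And>x. x \<in> OB \<Longrightarrow> norm x = 1"
    "card OB = dim W"
    using orthonormal_basis_subspace[OF W] by metis
  obtain u OB' where OBu: "OB = insert u OB'" "u \<notin> OB'" "1 \<le> card OB'"
    using dim OB(4) card_le_Suc_iff[of 1 OB] by auto
  then obtain v where "v \<in> OB'" by (metis card.empty ex_in_conv not_one_le_zero)
  then have "u \<in> OB" "v \<in> OB" "u \<noteq> v" using OBu by auto
  then show ?thesis
    using OB by (intro that[of u v]) (auto simp: pairwise_def orthogonal_def norm_eq_1)
qed

lemma unit_vector_in_subspace:
  fixes W :: "'a::euclidean_space set"
  assumes W: "subspace W" and "0 < dim W"
  obtains u where "u \<in> W" "u \<bullet> u = 1"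
proof -
  have "\<not> W \<subseteq> {0}" using assms(2) dim_eq_0[of W] by linarith
  then obtain w where "w \<in> W" "w \<noteq> 0" by blast
  then show ?thesis using W by (intro that[of "w /\<^sub>R norm w"]) (simp_all add: subspace_scale dot_square_norm power2_eq_square)
qed

lemma subspace_eigenspace: "subspace V \<Longrightarrow> subspace {y \<in> V. A *v y = k *\<^sub>R (y::real^'n)}"
  unfolding subspace_def
  by (auto simp: matrix_vector_right_distrib matrix_vector_mult_scaleR scaleR_add_right)

lemma dim_orthogonal_complement:
  fixes S :: "(real^'m::finite) set"
  assumes "finite S"
  shows "CARD('m) \<le> card S + dim {y. \<forall>x\<in>S. orthogonal x y}"
proof -
  have eq: "{y \<in> UNIV. \<forall>x\<in>span S. orthogonal x y} = {y. \<forall>x\<in>S. orthogonal x y}"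
  proof (intro set_eqI iffI)
    fix y assume "y \<in> {y. \<forall>x\<in>S. orthogonal x y}"
    then have "orthogonal y x" if "x \<in> span S" for x
      using orthogonal_to_span[OF that, of y] by (simp add: orthogonal_commute)
    then show "y \<in> {y \<in> UNIV. \<forall>x\<in>span S. orthogonal x y}" by (auto simp: orthogonal_commute)
  qed (auto intro: span_base)
  have "dim {y \<in> UNIV. \<forall>x\<in>span S. orthogonal x y} + dim (span S) = dim (UNIV :: (real^'m) set)"
    by (rule dim_subspace_orthogonal_to_vectors) auto
  moreover have "dim S \<le> card S" using assms by (intro dim_le_card) (auto intro: span_base)
  ultimately show ?thesis using eq by simp
qed


section \<open>Normal form of special orthogonal matrices\<close>
lemma quadratic_form_max_on_subspace:
  fixes Q :: "real^'m::finite^'m"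
  assumes U: "subspace U" and ne: "U \<noteq> {0}"
  obtains x where "x \<in> U" "x \<bullet> x = 1" "\<And>z. z \<in> U \<Longrightarrow> z \<bullet> (Q *v z) \<le> (x \<bullet> (Q *v x)) * (z \<bullet> z)"
proof -
  let ?g = "\<lambda>x. x \<bullet> (Q *v x)"
  let ?K = "U \<inter> sphere 0 1"
  have unit: "z /\<^sub>R norm z \<in> ?K" if "z \<in> U" "z \<noteq> 0" for z
    using that U by (auto simp: subspace_scale)
  obtain u where "u \<in> U" "u \<noteq> 0" using ne U subspace_0 by blast
  then have "?K \<noteq> {}" using unit by blast
  moreover have "compact ?K"
    using compact_Int_closed[OF compact_sphere closed_subspace[OF U], of 0 1] by (simp add: Int_commute)
  moreover have "continuous_on ?K ?g"
    by (intro continuous_intros linear_continuous_on) (simp add: bounded_linear_def matrix_vector_mul_linear)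
  ultimately obtain x where xK: "x \<in> ?K" and xmax: "\<And>y. y \<in> ?K \<Longrightarrow> ?g y \<le> ?g x"
    using continuous_attains_sup[of ?K ?g] by blast
  have "?g z \<le> ?g x * (z \<bullet> z)" if "z \<in> U" for z
  proof (cases "z = 0")
    case False
    have "?g (z /\<^sub>R norm z) = ?g z / (norm z)\<^sup>2"
      by (simp add: matrix_vector_mult_scaleR power2_eq_square field_simps)
    then have "?g z / (norm z)\<^sup>2 \<le> ?g x" using xmax[OF unit[OF that False]] by simp
    then show ?thesis using False by (simp add: dot_square_norm divide_le_eq)
  qed simp
  moreover have "x \<bullet> x = 1" using xK by (simp add: dot_square_norm)
  ultimately show ?thesis using that xK by blast
qed

text \<open>First-order condition at a maximiser x: along x + t w, with w the defect of the
  eigenvalue equation, the quotient would grow by t |w|^2 to first order.\<close>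
lemma symmetric_part_eigenvector_if_max:
  fixes Q :: "real^'m::finite^'m"
  assumes U: "subspace U" and xU: "x \<in> U" and xx: "x \<bullet> x = 1"
    and QU: "\<And>y. y \<in> U \<Longrightarrow> Q *v y \<in> U" and QtU: "\<And>y. y \<in> U \<Longrightarrow> transpose Q *v y \<in> U"
    and max: "\<And>z. z \<in> U \<Longrightarrow> z \<bullet> (Q *v z) \<le> (x \<bullet> (Q *v x)) * (z \<bullet> z)"
  shows "Q *v x + transpose Q *v x = (2 * (x \<bullet> (Q *v x))) *\<^sub>R x"
proof -
  let ?g = "\<lambda>x. x \<bullet> (Q *v x)"
  define c where "c = ?g x"
  define w where "w = Q *v x + transpose Q *v x - (2 * c) *\<^sub>R x"
  have wU: "w \<in> U" unfolding w_def using U QU QtU xU by (intro subspace_diff subspace_add subspace_scale) auto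
  have xQtx: "x \<bullet> (transpose Q *v x) = c"
    unfolding c_def by (metis inner_commute inner_matrix_vector_transpose)
  have "x \<bullet> w = 0"
    using xx xQtx by (simp add: w_def c_def inner_diff_right inner_add_right)
  then have wx: "w \<bullet> x = 0" by (simp add: inner_commute)
  have "w \<bullet> w = w \<bullet> (Q *v x + transpose Q *v x - (2 * c) *\<^sub>R x)"
    by (subst (2) w_def) (rule refl)
  then have wSx: "w \<bullet> (Q *v x + transpose Q *v x) = w \<bullet> w"
    by (simp add: inner_diff_right wx)
  have key: "t * (w \<bullet> w) \<le> t\<^sup>2 * (c * (w \<bullet> w) - ?g w)" for t
  proof -
    have "x \<bullet> (Q *v w) = w \<bullet> (transpose Q *v x)" by (metis inner_commute inner_matrix_vector_transpose)
    then have "?g (x + t *\<^sub>R w) = c + t * (w \<bullet> (Q *v x + transpose Q *v x)) + t\<^sup>2 * ?g w"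
      by (simp add: matrix_vector_right_distrib matrix_vector_mult_scaleR inner_add_left inner_add_right
          c_def power2_eq_square algebra_simps)
    moreover have "(x + t *\<^sub>R w) \<bullet> (x + t *\<^sub>R w) = 1 + t\<^sup>2 * (w \<bullet> w)"
      using xx wx by (simp add: inner_add_left inner_add_right inner_commute power2_eq_square)
    moreover have "?g (x + t *\<^sub>R w) \<le> c * ((x + t *\<^sub>R w) \<bullet> (x + t *\<^sub>R w))"
      using max U xU wU by (simp add: c_def subspace_add subspace_scale)
    ultimately show ?thesis unfolding wSx by (simp add: algebra_simps)
  qed
  have "w \<bullet> w \<le> 0"
  proof (rule ccontr)
    assume pos: "\<not> w \<bullet> w \<le> 0"
    define K where "K = c * (w \<bullet> w) - ?g w"
    have "K > 0" using key[of 1] pos K_def by simp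
    have "(w \<bullet> w) / (2 * K) * (w \<bullet> w) \<le> ((w \<bullet> w) / (2 * K))\<^sup>2 * K"
      using key[of "(w \<bullet> w) / (2 * K)"] by (simp add: K_def)
    then have "(w \<bullet> w) * (w \<bullet> w) \<le> 0" using \<open>K > 0\<close> by (simp add: power2_eq_square field_simps)
    moreover have "(w \<bullet> w) * (w \<bullet> w) > 0" using pos by (metis mult_pos_pos not_le)
    ultimately show False by linarith
  qed
  then have "w = 0" by (metis inner_gt_zero_iff not_le)
  then show ?thesis by (simp add: w_def c_def)
qed

definition rotation_pair :: "real^'m^'m \<Rightarrow> real^'m \<Rightarrow> real^'m \<Rightarrow> real \<Rightarrow> real \<Rightarrow> bool" where
  "rotation_pair Q u v c s \<longleftrightarrow> u \<bullet> u = 1 \<and> v \<bullet> v = 1 \<and> u \<bullet> v = 0 \<and> c\<^sup>2 + s\<^sup>2 = 1 \<and>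
     Q *v u = c *\<^sub>R u - s *\<^sub>R v \<and> Q *v v = s *\<^sub>R u + c *\<^sub>R v"

lemma rotation_pair_transpose:
  assumes oQ: "orthogonal_matrix Q" and pair: "rotation_pair Q u v c s"
  shows "transpose Q *v u = c *\<^sub>R u + s *\<^sub>R v" "transpose Q *v v = - s *\<^sub>R u + c *\<^sub>R v"
proof -
  have cs: "c\<^sup>2 + s\<^sup>2 = 1" and Qu: "Q *v u = c *\<^sub>R u - s *\<^sub>R v" and Qv: "Q *v v = s *\<^sub>R u + c *\<^sub>R v"
    using pair by (auto simp: rotation_pair_def)
  have "Q *v (c *\<^sub>R u + s *\<^sub>R v) = (c\<^sup>2 + s\<^sup>2) *\<^sub>R u"
    "Q *v (- s *\<^sub>R u + c *\<^sub>R v) = (c\<^sup>2 + s\<^sup>2) *\<^sub>R v"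
    by (simp_all add: Qu Qv algebra_simps power2_eq_square)
  then have "Q *v (c *\<^sub>R u + s *\<^sub>R v) = u" "Q *v (- s *\<^sub>R u + c *\<^sub>R v) = v"
    by (simp_all add: cs)
  then show "transpose Q *v u = c *\<^sub>R u + s *\<^sub>R v" "transpose Q *v v = - s *\<^sub>R u + c *\<^sub>R v"
    using orthogonal_matrix_vector_cancel(1)[OF oQ] by metis+
qed

lemma inner_orthogonal_matrix_sq_less_1:
  fixes Q :: "real^'m::finite^'m"
  assumes oQ: "orthogonal_matrix Q" and xx: "x \<bullet> x = 1" and "Q *v x \<noteq> x" "Q *v x \<noteq> - x"
  shows "(x \<bullet> (Q *v x))\<^sup>2 < 1"
proof -
  let ?c = "x \<bullet> (Q *v x)"
  have QxQx: "(Q *v x) \<bullet> (Q *v x) = 1" using orthogonal_matrix_inner[OF oQ] xx by simp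
  have "\<bar>?c\<bar> \<le> 1" using Cauchy_Schwarz_ineq2[of x "Q *v x"] xx QxQx by (simp add: norm_eq_sqrt_inner)
  moreover have "\<bar>?c\<bar> \<noteq> 1"
  proof
    assume c: "\<bar>?c\<bar> = 1"
    have "(Q *v x - ?c *\<^sub>R x) \<bullet> (Q *v x - ?c *\<^sub>R x) = 1 - ?c * ?c"
      using xx QxQx by (simp add: inner_diff_left inner_diff_right inner_commute)
    also have "?c * ?c = 1" using c by (metis abs_mult_self_eq mult_1)
    finally have "Q *v x = ?c *\<^sub>R x" by simp
    moreover have "?c = 1 \<or> ?c = -1" using c by auto
    ultimately show False using assms(3,4) by auto
  qed
  ultimately show ?thesis by (simp add: abs_square_less_1)
qed

lemma rotation_pair_from_symmetric_eigenvector: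
  fixes Q :: "real^'m::finite^'m"
  assumes oQ: "orthogonal_matrix Q" and xx: "x \<bullet> x = 1"
    and eig: "Q *v x + transpose Q *v x = (2 * (x \<bullet> (Q *v x))) *\<^sub>R x"
    and c: "(x \<bullet> (Q *v x))\<^sup>2 < 1"
  obtains v s where "rotation_pair Q x v (x \<bullet> (Q *v x)) s" "v \<in> span {x, Q *v x}"
proof -
  define c where "c = x \<bullet> (Q *v x)"
  define s where "s = sqrt (1 - c\<^sup>2)"
  have s: "s > 0" "s\<^sup>2 = 1 - c\<^sup>2" using c by (simp_all add: s_def c_def)
  define v where "v = (1 / s) *\<^sub>R (c *\<^sub>R x - Q *v x)"
  have sv: "s *\<^sub>R v = c *\<^sub>R x - Q *v x" using s(1) by (simp add: v_def)
  have QQx: "Q *v (Q *v x) = (2 * c) *\<^sub>R (Q *v x) - x"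
  proof -
    have "x = Q *v (transpose Q *v x)" by (rule orthogonal_matrix_vector_cancel(2)[OF oQ, symmetric])
    also have "transpose Q *v x = (2 * c) *\<^sub>R x - Q *v x" using eig by (simp add: c_def algebra_simps)
    finally have "x = (2 * c) *\<^sub>R (Q *v x) - Q *v (Q *v x)"
      by (simp add: matrix_vector_mult_diff_distrib matrix_vector_mult_scaleR)
    then show ?thesis by (simp add: eq_diff_eq add.commute)
  qed
  have "s *\<^sub>R (Q *v v) = Q *v (s *\<^sub>R v)" by (simp add: matrix_vector_mult_scaleR)
  also have "\<dots> = c *\<^sub>R (Q *v x) - Q *v (Q *v x)"
    by (simp add: sv matrix_vector_mult_diff_distrib matrix_vector_mult_scaleR)
  also have "\<dots> = x - c *\<^sub>R (Q *v x)" by (simp add: QQx vec_eq_iff algebra_simps)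
  also have "\<dots> = (s\<^sup>2 + c\<^sup>2) *\<^sub>R x - c *\<^sub>R (Q *v x)" using s(2) by simp
  also have "\<dots> = s *\<^sub>R (s *\<^sub>R x) + c *\<^sub>R (s *\<^sub>R v)"
    by (simp add: sv power2_eq_square scaleR_add_left algebra_simps)
  also have "\<dots> = s *\<^sub>R (s *\<^sub>R x + c *\<^sub>R v)" by (simp add: scaleR_add_right mult.commute)
  finally have Qv: "Q *v v = s *\<^sub>R x + c *\<^sub>R v" using s(1) by simp
  have xQx: "x \<bullet> (Q *v x) = c" "(Q *v x) \<bullet> x = c" "(Q *v x) \<bullet> (Q *v x) = 1"
    using orthogonal_matrix_inner[OF oQ, of x x] xx by (simp_all add: c_def inner_commute)
  have "(s *\<^sub>R v) \<bullet> (s *\<^sub>R v) = s\<^sup>2" "x \<bullet> (s *\<^sub>R v) = 0"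
    using s(2) by (simp_all add: sv inner_diff_left inner_diff_right xx xQx power2_eq_square)
  then have "v \<bullet> v = 1" "x \<bullet> v = 0" using s(1) by (simp_all add: power2_eq_square)
  then have "rotation_pair Q x v c s"
    unfolding rotation_pair_def using xx Qv s(2) by (simp add: sv)
  moreover have "v \<in> span {x, Q *v x}"
    unfolding v_def by (intro span_scale span_diff span_base) auto
  ultimately show ?thesis using that c_def by blast
qed

lemma rotation_pair_in_invariant_subspace:
  fixes Q :: "real^'m::finite^'m"
  assumes oQ: "orthogonal_matrix Q" and U: "subspace U" and ne: "U \<noteq> {0}"
    and QU: "\<And>y. y \<in> U \<Longrightarrow> Q *v y \<in> U" and QtU: "\<And>y. y \<in> U \<Longrightarrow> transpose Q *v y \<in> U"
    and no_eig: "\<And>y. y \<in> U \<Longrightarrow> Q *v y = y \<or> Q *v y = - y \<Longrightarrow> y = 0"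
  obtains u v c s where "rotation_pair Q u v c s" "u \<in> U" "v \<in> U"
proof -
  obtain x where xU: "x \<in> U" and xx: "x \<bullet> x = 1"
    and "\<And>z. z \<in> U \<Longrightarrow> z \<bullet> (Q *v z) \<le> (x \<bullet> (Q *v x)) * (z \<bullet> z)"
    using quadratic_form_max_on_subspace[OF U ne] by blast
  then have eig: "Q *v x + transpose Q *v x = (2 * (x \<bullet> (Q *v x))) *\<^sub>R x"
    using symmetric_part_eigenvector_if_max[OF U _ _ QU QtU] by blast
  have "x \<noteq> 0" using xx by auto
  then have "Q *v x \<noteq> x" "Q *v x \<noteq> - x" using no_eig[OF xU] by auto
  then have "(x \<bullet> (Q *v x))\<^sup>2 < 1" by (rule inner_orthogonal_matrix_sq_less_1[OF oQ xx])
  then obtain v s where "rotation_pair Q x v (x \<bullet> (Q *v x)) s" "v \<in> span {x, Q *v x}"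
    using rotation_pair_from_symmetric_eigenvector[OF oQ xx eig] by blast
  moreover have "span {x, Q *v x} \<subseteq> U" using U xU QU by (intro span_minimal) auto
  ultimately show ?thesis using that xU by blast
qed

definition rotation_frame ::
  "'n::finite rmat \<Rightarrow> 'n set \<Rightarrow> ('n \<Rightarrow> real^('n+'n)) \<Rightarrow> ('n \<Rightarrow> real^('n+'n))
     \<Rightarrow> ('n \<Rightarrow> real) \<Rightarrow> ('n \<Rightarrow> real) \<Rightarrow> bool" where
  "rotation_frame Q B e f c s \<longleftrightarrow> (\<forall>a\<in>B. rotation_pair Q (e a) (f a) (c a) (s a)) \<and>
     (\<forall>a\<in>B. \<forall>b\<in>B. a \<noteq> b \<longrightarrow> e a \<bullet> e b = 0 \<and> e a \<bullet> f b = 0 \<and> f a \<bullet> f b = 0)"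

lemma rotation_frame_orthonormal:
  assumes "rotation_frame Q B e f c s" "a \<in> B" "b \<in> B"
  shows "e a \<bullet> e b = (if a = b then 1 else 0)" "f a \<bullet> f b = (if a = b then 1 else 0)" "e a \<bullet> f b = 0"
proof -
  have "rotation_pair Q (e b) (f b) (c b) (s b)" using assms by (simp add: rotation_frame_def)
  moreover have "a \<noteq> b \<Longrightarrow> e a \<bullet> e b = 0 \<and> e a \<bullet> f b = 0 \<and> f a \<bullet> f b = 0"
    using assms by (simp add: rotation_frame_def)
  ultimately show "e a \<bullet> e b = (if a = b then 1 else 0)" "f a \<bullet> f b = (if a = b then 1 else 0)"
    "e a \<bullet> f b = 0"
    by (auto simp: rotation_pair_def)
qed

lemma rotation_frame_span_invariant:
  assumes oQ: "orthogonal_matrix Q" and frame: "rotation_frame Q B e f c s"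
    and x: "x \<in> e ` B \<union> f ` B"
  shows "Q *v x \<in> span (e ` B \<union> f ` B)" "transpose Q *v x \<in> span (e ` B \<union> f ` B)"
proof -
  obtain b where b: "b \<in> B" "x = e b \<or> x = f b" using x by blast
  have pair: "rotation_pair Q (e b) (f b) (c b) (s b)" using frame b by (simp add: rotation_frame_def)
  have "e b \<in> span (e ` B \<union> f ` B)" "f b \<in> span (e ` B \<union> f ` B)" using b by (auto intro: span_base)
  then show "Q *v x \<in> span (e ` B \<union> f ` B)" "transpose Q *v x \<in> span (e ` B \<union> f ` B)"
    using b(2) pair rotation_pair_transpose[OF oQ pair]
    by (auto simp: rotation_pair_def intro!: span_add span_diff span_scale)
qed

definition frame_matrix :: "('n::finite \<Rightarrow> real^('n+'n)) \<Rightarrow> ('n \<Rightarrow> real^('n+'n)) \<Rightarrow> 'n rmat" where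
  "frame_matrix e f = (\<chi> i j. case j of Inl a \<Rightarrow> e a $ i | Inr a \<Rightarrow> f a $ i)"

lemma column_frame_matrix:
  "column (Inl a) (frame_matrix e f) = e a" "column (Inr a) (frame_matrix e f) = f a"
  by (simp_all add: frame_matrix_def column_def)

lemma orthogonal_frame_matrix:
  assumes "\<And>a b. e a \<bullet> e b = (if a = b then 1 else 0)" "\<And>a b. f a \<bullet> f b = (if a = b then 1 else 0)"
    and "\<And>a b. e a \<bullet> f b = 0"
  shows "orthogonal_matrix (frame_matrix e f)"
  unfolding orthogonal_matrix
  by (rule mat_eqI, unfold matrix_mult_transpose_dot_column, case_tac i; case_tac j)
     (auto simp: column_frame_matrix mat_def assms inner_commute[of "f _" "e _"])

lemma frame_matrix_intertwines:
  assumes Qe: "\<And>a. Q *v e a = c a *\<^sub>R e a - s a *\<^sub>R f a"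
    and Qf: "\<And>a. Q *v f a = d a *\<^sub>R (s a *\<^sub>R e a + c a *\<^sub>R f a)"
  shows "Q ** frame_matrix e f = frame_matrix e f ** (block_rot c s ** diag_Inr d)"
proof (rule mat_eqI)
  fix i j
  have PR: "(frame_matrix e f ** block_rot c s) $ i $ Inl a = c a * e a $ i - s a * f a $ i"
    "(frame_matrix e f ** block_rot c s) $ i $ Inr a = s a * e a $ i + c a * f a $ i" for a
    by (simp_all add: matrix_matrix_mult_def sum_UNIV_Plus frame_matrix_def if_distrib if_distribR
        cong: if_cong)
  have QP: "(Q ** frame_matrix e f) $ i $ j = (Q *v column j (frame_matrix e f)) $ i"
    by (simp add: matrix_matrix_mult_def matrix_vector_mult_def column_def)
  show "(Q ** frame_matrix e f) $ i $ j = (frame_matrix e f ** (block_rot c s ** diag_Inr d)) $ i $ j"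
    unfolding QP matrix_mul_assoc
    by (cases j) (simp_all add: column_frame_matrix Qe Qf diag_Inr_mult_right PR algebra_simps)
qed

text \<open>Completing the frame by eigenvectors for 1 and -1 exhibits Q as a block rotation
  composed with a reflection.\<close>
lemma det_rotation_frame_with_reflection:
  fixes Q :: "'n::finite rmat"
  assumes frame: "rotation_frame Q B e f c s" and aB: "a \<notin> B" and BU: "insert a B = UNIV"
    and u: "u \<bullet> u = 1" and v: "v \<bullet> v = 1" and uv: "u \<bullet> v = 0"
    and Qu: "Q *v u = u" and Qv: "Q *v v = - v"
    and orth: "\<forall>b\<in>B. e b \<bullet> u = 0 \<and> f b \<bullet> u = 0 \<and> e b \<bullet> v = 0 \<and> f b \<bullet> v = 0"
  shows "det Q = -1"
proof -
  define E where "E = e(a := u)"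
  define F where "F = f(a := v)"
  define C where "C = c(a := 1)"
  define S where "S = s(a := 0)"
  define d where "d = (\<lambda>b. if b = a then -1 else (1::real))"
  have mem: "x = a \<or> x \<in> B" for x using BU by auto
  note on = rotation_frame_orthonormal[OF frame]
  have pair: "rotation_pair Q (e b) (f b) (c b) (s b)" if "b \<in> B" for b
    using frame that by (simp add: rotation_frame_def)
  have "E x \<bullet> E y = (if x = y then 1 else 0)" "F x \<bullet> F y = (if x = y then 1 else 0)" "E x \<bullet> F y = 0" for x y
    using mem[of x] mem[of y] on[of x y] orth u v uv aB by (auto simp: E_def F_def inner_commute)
  then have "orthogonal_matrix (frame_matrix E F)" by (rule orthogonal_frame_matrix)
  then have P: "det (frame_matrix E F) \<noteq> 0" using det_orthogonal_matrix by fastforce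
  have "Q *v E x = C x *\<^sub>R E x - S x *\<^sub>R F x" "Q *v F x = d x *\<^sub>R (S x *\<^sub>R E x + C x *\<^sub>R F x)"
    "(C x)\<^sup>2 + (S x)\<^sup>2 = 1" for x
    using mem[of x] pair[of x] Qu Qv aB by (auto simp: E_def F_def C_def S_def d_def rotation_pair_def)
  then have "det Q * det (frame_matrix E F) = det (frame_matrix E F) * (1 * (\<Prod>b\<in>UNIV. d b))"
    using frame_matrix_intertwines[of Q E C S F d] by (metis det_mul det_block_rot det_diag_Inr)
  also have "(\<Prod>b\<in>UNIV. d b) = -1" by (simp add: d_def)
  finally have "det Q * det (frame_matrix E F) = (-1) * det (frame_matrix E F)" by simp
  then show ?thesis using P by (simp only: mult_cancel_right) simp
qed

lemma dim_frame_complement: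
  fixes e f :: "'n::finite \<Rightarrow> real^('n+'n)"
  shows "2 * (CARD('n) - card B) \<le> dim {y. \<forall>x\<in>e ` B \<union> f ` B. orthogonal x y}"
proof -
  have "CARD('n + 'n) \<le> card (e ` B \<union> f ` B) + dim {y. \<forall>x\<in>e ` B \<union> f ` B. orthogonal x y}"
    by (rule dim_orthogonal_complement) simp
  moreover have "card (e ` B \<union> f ` B) \<le> 2 * card B"
    using card_Un_le[of "e ` B" "f ` B"] card_image_le[of B e] card_image_le[of B f] by simp
  ultimately show ?thesis by (simp add: card_Plus)
qed

lemma rotation_pair_in_eigenspaces:
  fixes Q :: "'n::finite rmat"
  assumes oQ: "orthogonal_matrix Q" and dQ: "det Q = 1"
    and frame: "rotation_frame Q B e f c s" and aB: "a \<notin> B"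
    and V: "V = {y. \<forall>x\<in>e ` B \<union> f ` B. orthogonal x y}"
    and span: "V \<subseteq> span ({y \<in> V. Q *v y = y} \<union> {y \<in> V. Q *v y = - y})"
  obtains u v c' s' where "rotation_pair Q u v c' s'" "u \<in> V" "v \<in> V"
proof -
  define W1 where "W1 = {y \<in> V. Q *v y = y}"
  define W2 where "W2 = {y \<in> V. Q *v y = - y}"
  have "subspace V" unfolding V by (rule subspace_orthogonal_to_vectors)
  then have W1: "subspace W1" and W2: "subspace W2"
    using subspace_eigenspace[of V Q 1] subspace_eigenspace[of V Q "-1"] by (simp_all add: W1_def W2_def)
  consider "2 \<le> dim W1" | "2 \<le> dim W2" | "dim W1 \<le> 1" "dim W2 \<le> 1" by linarith
  then show ?thesis
  proof cases
    case 1
    then obtain u v where "u \<in> W1" "v \<in> W1" "u \<bullet> u = 1" "v \<bullet> v = 1" "u \<bullet> v = 0"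
      by (rule orthonormal_pair_in_subspace[OF W1])
    then show ?thesis by (intro that[of u v 1 0]) (auto simp: rotation_pair_def W1_def)
  next
    case 2
    then obtain u v where "u \<in> W2" "v \<in> W2" "u \<bullet> u = 1" "v \<bullet> v = 1" "u \<bullet> v = 0"
      by (rule orthonormal_pair_in_subspace[OF W2])
    then show ?thesis by (intro that[of u v "-1" 0]) (auto simp: rotation_pair_def W2_def)
  next
    case 3
    have "dim V \<le> dim (W1 \<union> W2)" using span by (simp add: dim_mono W1_def W2_def)
    moreover have "2 * (CARD('n) - card B) \<le> dim V" unfolding V by (rule dim_frame_complement)
    moreover have "card B < CARD('n)" using aB by (metis UNIV_I finite psubset_card_mono psubsetI subsetI)
    ultimately have "card B = CARD('n) - 1" "dim W1 = 1" "dim W2 = 1"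
      using dim_Un_le[of W1 W2] 3 by linarith+
    have "insert a B = UNIV"
      using \<open>card B = CARD('n) - 1\<close> aB by (intro card_subset_eq) (auto simp: card_insert_if)
    obtain u where u: "u \<in> W1" "u \<bullet> u = 1" using unit_vector_in_subspace[OF W1] \<open>dim W1 = 1\<close> by auto
    obtain v where v: "v \<in> W2" "v \<bullet> v = 1" using unit_vector_in_subspace[OF W2] \<open>dim W2 = 1\<close> by auto
    have Qu: "Q *v u = u" and Qv: "Q *v v = - v" using u v by (simp_all add: W1_def W2_def)
    have "u \<bullet> v = - (u \<bullet> v)" using orthogonal_matrix_inner[OF oQ, of u v] by (simp add: Qu Qv)
    then have "u \<bullet> v = 0" by simp
    moreover have "\<forall>b\<in>B. e b \<bullet> u = 0 \<and> f b \<bullet> u = 0 \<and> e b \<bullet> v = 0 \<and> f b \<bullet> v = 0"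
      using u v by (auto simp: W1_def W2_def V orthogonal_def)
    ultimately have "det Q = -1"
      using det_rotation_frame_with_reflection[OF frame aB \<open>insert a B = UNIV\<close>] u v Qu Qv by blast
    with dQ show ?thesis by simp
  qed
qed

lemma orthogonal_to_sign_eigenvectors_invariant:
  fixes Q :: "real^'m::finite^'m"
  assumes oQ: "orthogonal_matrix Q"
    and QV: "\<And>y. y \<in> V \<Longrightarrow> Q *v y \<in> V" and QtV: "\<And>y. y \<in> V \<Longrightarrow> transpose Q *v y \<in> V"
    and W: "W = {y \<in> V. Q *v y = y} \<union> {y \<in> V. Q *v y = - y}"
    and y: "y \<in> V" "\<forall>w\<in>W. orthogonal w y"
  shows "Q *v y \<in> V \<and> (\<forall>w\<in>W. orthogonal w (Q *v y))"
    "transpose Q *v y \<in> V \<and> (\<forall>w\<in>W. orthogonal w (transpose Q *v y))"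
proof -
  have "Q *v w \<in> span W \<and> transpose Q *v w \<in> span W" if "w \<in> W" for w
  proof -
    have "Q *v w = w \<or> Q *v w = - w" using that by (auto simp: W)
    moreover have "transpose Q *v (Q *v w) = w" by (rule orthogonal_matrix_vector_cancel(1)[OF oQ])
    ultimately have "Q *v w \<in> {w, - w}" "transpose Q *v w \<in> {w, - w}"
      by (auto simp: matrix_vector_mult_uminus_right minus_equation_iff)
    moreover have "w \<in> span W" "- w \<in> span W" using that by (simp_all add: span_base span_neg)
    ultimately show ?thesis by auto
  qed
  then show "Q *v y \<in> V \<and> (\<forall>w\<in>W. orthogonal w (Q *v y))"
    "transpose Q *v y \<in> V \<and> (\<forall>w\<in>W. orthogonal w (transpose Q *v y))"
    using orthogonal_complement_transpose_invariant[of W "transpose Q" y]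
      orthogonal_complement_transpose_invariant[of W Q y] QV QtV y
    by auto
qed

text \<open>Off the eigenvectors for 1 and -1 the symmetric part of Q has an eigenvector spanning a
  rotation plane with its image; if they span everything, det Q = 1 forces two orthonormal ones with
  the same eigenvalue.\<close>
lemma rotation_frame_extend:
  fixes Q :: "'n::finite rmat"
  assumes oQ: "orthogonal_matrix Q" and dQ: "det Q = 1"
    and frame: "rotation_frame Q B e f c s" and aB: "a \<notin> B"
  obtains u v c' s' where "rotation_pair Q u v c' s'"
    "\<forall>b\<in>B. e b \<bullet> u = 0 \<and> f b \<bullet> u = 0 \<and> e b \<bullet> v = 0 \<and> f b \<bullet> v = 0"
proof -
  let ?S = "e ` B \<union> f ` B"
  define V where "V = {y. \<forall>x\<in>?S. orthogonal x y}"
  have V: "subspace V" unfolding V_def by (rule subspace_orthogonal_to_vectors)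
  have QV: "Q *v y \<in> V" and QtV: "transpose Q *v y \<in> V" if "y \<in> V" for y
    using orthogonal_complement_transpose_invariant[of ?S "transpose Q" y]
      orthogonal_complement_transpose_invariant[of ?S Q y]
      rotation_frame_span_invariant[OF oQ frame] that
    by (simp_all add: V_def)
  define W where "W = {y \<in> V. Q *v y = y} \<union> {y \<in> V. Q *v y = - y}"
  define U where "U = {y \<in> V. \<forall>w\<in>W. orthogonal w y}"
  have "\<exists>u v c' s'. rotation_pair Q u v c' s' \<and> u \<in> V \<and> v \<in> V"
  proof (cases "U \<subseteq> {0}")
    case True
    then have "V \<subseteq> span W"
      using subset_span_if_orthogonal_complement_trivial[OF V, of W] by (auto simp: U_def W_def)
    then show ?thesis
      using rotation_pair_in_eigenspaces[OF oQ dQ frame aB V_def] by (metis W_def)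
  next
    case False
    have U: "subspace U"
      using subspace_inter[OF V subspace_orthogonal_to_vectors[of W]] by (simp add: U_def Int_def)
    have QU: "Q *v y \<in> U" and QtU: "transpose Q *v y \<in> U" if "y \<in> U" for y
      using orthogonal_to_sign_eigenvectors_invariant[OF oQ QV QtV W_def] that by (simp_all add: U_def)
    have "y = 0" if "y \<in> U" "Q *v y = y \<or> Q *v y = - y" for y
    proof -
      have "y \<in> W" using that by (auto simp: U_def W_def)
      then have "y \<bullet> y = 0" using that(1) by (auto simp: U_def orthogonal_def)
      then show "y = 0" by simp
    qed
    then obtain u v c' s' where "rotation_pair Q u v c' s'" "u \<in> U" "v \<in> U"
      using rotation_pair_in_invariant_subspace[OF oQ U _ QU QtU] False by blast
    then show ?thesis by (auto simp: U_def)
  qed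
  then show ?thesis using that by (auto simp: V_def orthogonal_def)
qed

lemma rotation_frame_exists:
  fixes Q :: "'n::finite rmat"
  assumes oQ: "orthogonal_matrix Q" and dQ: "det Q = 1"
  shows "\<exists>e f c s. rotation_frame Q B e f c s"
  using finite[of B]
proof (induction B rule: finite_induct)
  case empty
  show ?case by (simp add: rotation_frame_def)
next
  case (insert a B)
  then obtain e f c s where frame: "rotation_frame Q B e f c s" by blast
  obtain u v c' s' where "rotation_pair Q u v c' s'"
    "\<forall>b\<in>B. e b \<bullet> u = 0 \<and> f b \<bullet> u = 0 \<and> e b \<bullet> v = 0 \<and> f b \<bullet> v = 0"
    using rotation_frame_extend[OF oQ dQ frame insert(2)] by blast
  then have "rotation_frame Q (insert a B) (e(a := u)) (f(a := v)) (c(a := c')) (s(a := s'))"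
    using frame insert(2) by (auto simp: rotation_frame_def inner_commute)
  then show ?case by blast
qed

lemma SO_normal_form:
  fixes Q :: "'n::finite rmat"
  assumes oQ: "orthogonal_matrix Q" and dQ: "det Q = 1"
  obtains P c s where "orthogonal_matrix P" "\<And>a. (c a)\<^sup>2 + (s a)\<^sup>2 = 1"
    "Q = P ** block_rot c s ** transpose P"
proof -
  obtain e f c s where frame: "rotation_frame Q UNIV e f c s"
    using rotation_frame_exists[OF oQ dQ] by blast
  have pair: "rotation_pair Q (e a) (f a) (c a) (s a)" for a
    using frame by (simp add: rotation_frame_def)
  let ?P = "frame_matrix e f"
  have oP: "orthogonal_matrix ?P"
    using rotation_frame_orthonormal[OF frame] by (intro orthogonal_frame_matrix) auto
  have "Q ** ?P = ?P ** block_rot c s"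
    using frame_matrix_intertwines[of Q e c s f "\<lambda>_. 1"] pair
    by (simp add: rotation_pair_def diag_Inr_one)
  then have "Q = ?P ** block_rot c s ** transpose ?P"
    using oP by (metis matrix_mul_assoc matrix_mul_rid orthogonal_matrix_def)
  then show ?thesis using pair by (intro that[OF oP]) (simp_all add: rotation_pair_def)
qed

lemma SO_normal_form_SO:
  fixes Q :: "'n::finite rmat"
  assumes "Q \<in> SO"
  obtains P c s where "P \<in> SO" "\<And>a. (c a)\<^sup>2 + (s a)\<^sup>2 = 1" "Q = P ** block_rot c s ** transpose P"
proof -
  have "orthogonal_matrix Q" "det Q = 1" using assms by (simp_all add: SO_def)
  then obtain P c s where oP: "orthogonal_matrix P" and cs: "\<And>a. (c a)\<^sup>2 + (s a)\<^sup>2 = 1"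
    and Q: "Q = P ** block_rot c s ** transpose P"
    using SO_normal_form by blast
  show ?thesis
  proof (cases "det P = 1")
    case True
    then show ?thesis using that[OF _ cs Q] oP by (simp add: SO_def)
  next
    case False
    then have dP: "det P = -1" using det_orthogonal_matrix[OF oP] by auto
    obtain a0 :: 'n where True by blast
    define q where "q a = (if a = a0 then -1 else 1 :: real)" for a
    have q: "(q a)\<^sup>2 = 1" for a by (simp add: q_def)
    let ?D = "diag_Inr q"
    have "det ?D = -1" by (simp add: det_diag_Inr q_def)
    moreover have "orthogonal_matrix ?D" by (rule orthogonal_diag_Inr[OF q])
    ultimately have "P ** ?D \<in> SO" using oP dP by (simp add: SO_def det_mul orthogonal_matrix_mul)
    moreover have "(c a)\<^sup>2 + (q a * s a)\<^sup>2 = 1" for a using cs[of a] q[of a] by (simp add: power_mult_distrib)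
    moreover have "Q = (P ** ?D) ** block_rot c (\<lambda>a. q a * s a) ** transpose (P ** ?D)"
    proof -
      have "?D ** block_rot c (\<lambda>a. q a * s a) ** ?D = block_rot c s"
        using q by (simp add: diag_Inr_conj_block_rot mult.assoc[symmetric] power2_eq_square)
      moreover have "(P ** ?D) ** block_rot c (\<lambda>a. q a * s a) ** transpose (P ** ?D)
          = P ** (?D ** block_rot c (\<lambda>a. q a * s a) ** ?D) ** transpose P"
        by (simp add: matrix_transpose_mul transpose_diag_Inr matrix_mul_assoc)
      ultimately show ?thesis by (simp add: Q)
    qed
    ultimately show ?thesis by (rule that)
  qed
qed

lemma SO_commuting_rotated_J0:
  fixes A :: "'n::finite rmat"
  assumes "A \<in> SO"
  obtains R where "R \<in> SO" "rotated_J0 R ** A = A ** rotated_J0 R"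
proof -
  obtain P c s where P: "P \<in> SO" and A: "A = P ** block_rot c s ** transpose P"
    using SO_normal_form_SO[OF assms] by blast
  have PP: "transpose P ** P = mat 1" using P by (simp add: SO_def orthogonal_matrix_def)
  have conj: "(P ** X ** transpose P) ** (P ** Y ** transpose P) = P ** (X ** Y) ** transpose P"
    for X Y :: "'n rmat"
    by (simp add: matrix_mul_assoc) (simp add: PP flip: matrix_mul_assoc)
  have "rotated_J0 P ** A = A ** rotated_J0 P"
    unfolding rotated_J0_def A conj J0_eq_block_rot block_rot_commute ..
  with P show ?thesis by (rule that)
qed


section \<open>Real functions with entire extensions\<close>

definition entire_real :: "(real \<Rightarrow> real) \<Rightarrow> bool" where
  "entire_real f \<longleftrightarrow> (\<exists>g. g holomorphic_on UNIV \<and> (\<forall>t. g (complex_of_real t) = complex_of_real (f t)))"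

lemma entire_real_const: "entire_real (\<lambda>t. c)"
  unfolding entire_real_def by (intro exI[of _ "\<lambda>_. complex_of_real c"]) auto

lemma entire_real_binop:
  assumes "entire_real f" "entire_real g"
    and "\<And>F G. F holomorphic_on UNIV \<Longrightarrow> G holomorphic_on UNIV \<Longrightarrow> (\<lambda>z. H (F z) (G z)) holomorphic_on UNIV"
    and "\<And>x y. H (complex_of_real x) (complex_of_real y) = complex_of_real (h x y)"
  shows "entire_real (\<lambda>t. h (f t) (g t))"
proof -
  obtain F G where "F holomorphic_on UNIV" "\<forall>t. F (complex_of_real t) = complex_of_real (f t)"
    "G holomorphic_on UNIV" "\<forall>t. G (complex_of_real t) = complex_of_real (g t)"
    using assms(1,2) unfolding entire_real_def by blast
  then show ?thesis unfolding entire_real_def using assms(3,4) by (intro exI[of _ "\<lambda>z. H (F z) (G z)"]) auto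
qed

lemma entire_real_add: "entire_real f \<Longrightarrow> entire_real g \<Longrightarrow> entire_real (\<lambda>t. f t + g t)"
  by (rule entire_real_binop[where H = "(+)"]) (auto intro: holomorphic_intros)

lemma entire_real_diff: "entire_real f \<Longrightarrow> entire_real g \<Longrightarrow> entire_real (\<lambda>t. f t - g t)"
  by (rule entire_real_binop[where H = "(-)"]) (auto intro: holomorphic_intros)

lemma entire_real_mult: "entire_real f \<Longrightarrow> entire_real g \<Longrightarrow> entire_real (\<lambda>t. f t * g t)"
  by (rule entire_real_binop[where H = "(*)"]) (auto intro: holomorphic_intros)

lemma entire_real_uminus: "entire_real f \<Longrightarrow> entire_real (\<lambda>t. - f t)"
  using entire_real_diff[OF entire_real_const, of f 0] by simp

lemma entire_real_if: "entire_real f \<Longrightarrow> entire_real g \<Longrightarrow> entire_real (\<lambda>t. if P then f t else g t)"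
  by (cases P) simp_all

lemma entire_real_cos: "entire_real (\<lambda>t. cos (a * t))"
  unfolding entire_real_def
  by (intro exI[of _ "\<lambda>z. cos (complex_of_real a * z)"])
     (auto intro!: holomorphic_intros simp: cos_of_real[symmetric])

lemma entire_real_sin: "entire_real (\<lambda>t. sin (a * t))"
  unfolding entire_real_def
  by (intro exI[of _ "\<lambda>z. sin (complex_of_real a * z)"])
     (auto intro!: holomorphic_intros simp: sin_of_real[symmetric])

lemma entire_real_sum:
  "finite S \<Longrightarrow> (\<And>x. x \<in> S \<Longrightarrow> entire_real (f x)) \<Longrightarrow> entire_real (\<lambda>t. \<Sum>x\<in>S. f x t)"
  by (induction S rule: finite_induct) (auto intro: entire_real_add entire_real_const)

lemma entire_real_prod:
  "finite S \<Longrightarrow> (\<And>x. x \<in> S \<Longrightarrow> entire_real (f x)) \<Longrightarrow> entire_real (\<lambda>t. \<Prod>x\<in>S. f x t)"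
  by (induction S rule: finite_induct) (auto intro: entire_real_mult entire_real_const)

text \<open>By the identity theorem the product of the extensions vanishes identically,
  so one extension vanishes on the open set where the other does not.\<close>
lemma entire_real_common_nonzero:
  assumes f: "entire_real f" and g: "entire_real g" and fa: "f a \<noteq> 0" and gb: "g b \<noteq> 0"
  obtains t where "f t \<noteq> 0" "g t \<noteq> 0"
proof (rule ccontr)
  assume H: "\<not> thesis"
  obtain F where F: "F holomorphic_on UNIV" "\<And>t. F (complex_of_real t) = complex_of_real (f t)"
    using f unfolding entire_real_def by blast
  obtain G where G: "G holomorphic_on UNIV" "\<And>t. G (complex_of_real t) = complex_of_real (g t)"
    using g unfolding entire_real_def by blast
  have limpt: "0 islimpt (range complex_of_real)"
  proof (rule islimpt_approachable[THEN iffD2], intro allI impI)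
    fix e :: real assume "e > 0"
    then show "\<exists>x\<in>range complex_of_real. x \<noteq> 0 \<and> dist x 0 < e"
      by (intro bexI[OF _ rangeI[of complex_of_real "e / 2"]]) auto
  qed
  have fg: "f t = 0 \<or> g t = 0" for t using that H by blast
  have FG: "F z * G z = 0" for z
  proof (rule analytic_continuation[of "\<lambda>z. F z * G z" UNIV "range complex_of_real" 0])
    show "(\<lambda>z. F z * G z) holomorphic_on UNIV" using F(1) G(1) by (rule holomorphic_on_mult)
    fix w assume "w \<in> range complex_of_real"
    then obtain t where "w = complex_of_real t" by blast
    then show "F w * G w = 0" using F(2)[of t] G(2)[of t] fg[of t] by auto
  qed (use limpt in auto)
  have opn: "open {z. F z \<noteq> 0}"
    using F(1) by (intro open_Collect_neq holomorphic_on_imp_continuous_on continuous_on_const)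
  have ne: "{z. F z \<noteq> 0} \<noteq> {}" using F(2)[of a] fa by (auto intro!: exI[of _ "complex_of_real a"])
  have "G z = 0" for z
  proof (rule analytic_continuation_open[of "{z. F z \<noteq> 0}" UNIV G "\<lambda>_. 0"])
    fix w assume "w \<in> {z. F z \<noteq> 0}"
    then show "G w = 0" using FG[of w] by simp
  qed (use opn ne G(1) in auto)
  with G(2)[of b] gb show False by simp
qed

definition entire_real_matrix :: "(real \<Rightarrow> real^'n::finite^'m::finite) \<Rightarrow> bool" where
  "entire_real_matrix X \<longleftrightarrow> (\<forall>i j. entire_real (\<lambda>t. X t $ i $ j))"

lemma entire_real_matrix_const: "entire_real_matrix (\<lambda>t. A)"
  by (simp add: entire_real_matrix_def entire_real_const)

lemma entire_real_matrix_mult: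
  "entire_real_matrix X \<Longrightarrow> entire_real_matrix Y \<Longrightarrow> entire_real_matrix (\<lambda>t. X t ** Y t)"
  unfolding entire_real_matrix_def matrix_matrix_mult_def by (auto intro!: entire_real_sum entire_real_mult)

lemma entire_real_matrix_diff:
  "entire_real_matrix X \<Longrightarrow> entire_real_matrix Y \<Longrightarrow> entire_real_matrix (\<lambda>t. X t - Y t)"
  unfolding entire_real_matrix_def by (auto intro!: entire_real_diff)

lemma entire_real_matrix_scaleR: "entire_real_matrix X \<Longrightarrow> entire_real_matrix (\<lambda>t. c *\<^sub>R X t)"
  unfolding entire_real_matrix_def by (auto intro!: entire_real_mult entire_real_const)

lemma entire_real_matrix_transpose: "entire_real_matrix X \<Longrightarrow> entire_real_matrix (\<lambda>t. transpose (X t))"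
  unfolding entire_real_matrix_def transpose_def by auto

lemma entire_real_det: "entire_real_matrix X \<Longrightarrow> entire_real (\<lambda>t. det (X t))"
  unfolding entire_real_matrix_def det_def
  by (auto intro!: entire_real_sum entire_real_mult entire_real_const entire_real_prod)

lemma entire_real_matrix_block_rot:
  fixes \<theta> :: "'n::finite \<Rightarrow> real"
  shows "entire_real_matrix (\<lambda>t. block_rot (\<lambda>a. cos (\<theta> a * t)) (\<lambda>a. sin (\<theta> a * t)))"
  unfolding entire_real_matrix_def
proof (intro allI)
  fix i j :: "'n::finite + 'n"
  show "entire_real (\<lambda>t. block_rot (\<lambda>a. cos (\<theta> a * t)) (\<lambda>a. sin (\<theta> a * t)) $ i $ j)"
    by (cases i; cases j)
       (simp_all add: entire_real_if entire_real_cos entire_real_sin entire_real_const entire_real_uminus)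
qed


section \<open>Transversality of a complex structure to finitely many rotations\<close>

text \<open>Rotate R1 into R2 along the one-parameter group through the normal form of R1^T R2.\<close>
lemma SO_entire_path:
  fixes R1 R2 :: "'n::finite rmat"
  assumes R1: "R1 \<in> SO" and R2: "R2 \<in> SO"
  obtains R where "R 0 = R1" "R 1 = R2" "\<And>t. R t \<in> SO" "entire_real_matrix R"
proof -
  have o1: "orthogonal_matrix R1" and o2: "orthogonal_matrix R2" and "det R1 = 1" "det R2 = 1"
    using R1 R2 by (simp_all add: SO_def)
  then have "transpose R1 ** R2 \<in> SO" by (simp add: SO_def det_mul det_transpose orthogonal_matrix_mul)
  then obtain P c s where P: "P \<in> SO" and cs: "\<And>a. (c a)\<^sup>2 + (s a)\<^sup>2 = 1"
    and Q: "transpose R1 ** R2 = P ** block_rot c s ** transpose P"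
    using SO_normal_form_SO by blast
  have "\<exists>\<theta>. c a = cos \<theta> \<and> s a = sin \<theta>" for a
    using sincos_total_2pi[of "c a" "s a"] cs[of a] by metis
  then obtain \<theta> where \<theta>: "c = (\<lambda>a. cos (\<theta> a))" "s = (\<lambda>a. sin (\<theta> a))" by metis
  define R where "R t = R1 ** P ** block_rot (\<lambda>a. cos (\<theta> a * t)) (\<lambda>a. sin (\<theta> a * t)) ** transpose P" for t
  have oP: "orthogonal_matrix P" and dP: "det P = 1" using P by (simp_all add: SO_def)
  have "R t \<in> SO" for t
    using o1 oP \<open>det R1 = 1\<close> dP
    by (simp add: R_def SO_def det_mul det_transpose det_block_rot orthogonal_matrix_mul orthogonal_block_rot)
  moreover have "R 0 = R1"
    using oP by (simp add: R_def block_rot_id orthogonal_matrix_def flip: matrix_mul_assoc)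
  moreover have "R 1 = R1 ** (transpose R1 ** R2)"
    by (simp add: R_def \<theta>[symmetric] Q matrix_mul_assoc)
  then have "R 1 = R2" using o1 by (simp add: orthogonal_matrix_def matrix_mul_assoc)
  moreover have "entire_real_matrix R"
    unfolding R_def
    by (intro entire_real_matrix_mult entire_real_matrix_transpose entire_real_matrix_const
        entire_real_matrix_block_rot)
  ultimately show ?thesis using that by blast
qed

lemma entire_real_det_Cm_rotated_J0:
  "entire_real_matrix R \<Longrightarrow> entire_real (\<lambda>t. det (Cm (rotated_J0 (R t)) A))"
  unfolding Cm_def rotated_J0_def
  by (intro entire_real_det entire_real_matrix_scaleR entire_real_matrix_diff entire_real_matrix_mult
      entire_real_matrix_transpose entire_real_matrix_const)

lemma exists_rotated_J0_Cm_invertible: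
  fixes S :: "'n::finite rmat set"
  assumes "finite S" "S \<subseteq> SO"
  shows "\<exists>R\<in>SO. \<forall>A\<in>S. invertible (Cm (rotated_J0 R) A)"
  using assms
proof (induction S rule: finite_induct)
  case empty
  have "mat 1 \<in> (SO :: 'n rmat set)" by (simp add: SO_def orthogonal_matrix_id)
  then show ?case by blast
next
  case (insert A S)
  then obtain R1 where R1: "R1 \<in> SO" and inv1: "\<forall>B\<in>S. invertible (Cm (rotated_J0 R1) B)" by blast
  have A: "A \<in> SO" using insert.prems by simp
  then obtain R2 where R2: "R2 \<in> SO" and comm: "rotated_J0 R2 ** A = A ** rotated_J0 R2"
    by (rule SO_commuting_rotated_J0)
  have "Cm (rotated_J0 R2) A = A"
    using R2 comm by (intro Cm_eq_self_if_commute compat_cs_rotated_J0) (simp_all add: SO_def)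
  then have inv2: "invertible (Cm (rotated_J0 R2) A)"
    using A by (auto simp: SO_def invertible_det_nz)
  obtain R where R0: "R 0 = R1" and R1': "R 1 = R2" and RSO: "\<And>t. R t \<in> SO"
    and ent: "entire_real_matrix R"
    using SO_entire_path[OF R1 R2] by blast
  define F where "F t = (\<Prod>B\<in>S. det (Cm (rotated_J0 (R t)) B))" for t
  define G where "G t = det (Cm (rotated_J0 (R t)) A)" for t
  have "entire_real F" unfolding F_def
    by (intro entire_real_prod insert.hyps(1) entire_real_det_Cm_rotated_J0[OF ent])
  moreover have "entire_real G" unfolding G_def by (rule entire_real_det_Cm_rotated_J0[OF ent])
  moreover have "F 0 \<noteq> 0" using inv1 insert.hyps(1) by (simp add: F_def R0 invertible_det_nz)
  moreover have "G 1 \<noteq> 0" using inv2 by (simp add: G_def R1' invertible_det_nz)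
  ultimately obtain t where "F t \<noteq> 0" "G t \<noteq> 0" by (rule entire_real_common_nonzero)
  then have "\<forall>B\<in>insert A S. invertible (Cm (rotated_J0 (R t)) B)"
    using insert.hyps(1) by (simp add: F_def G_def invertible_det_nz)
  then show ?case using RSO by blast
qed

theorem proposition4:
  fixes M1 M2 :: "real ^ ('n::finite + 'n) ^ ('n + 'n)"
  assumes "M1 \<in> SO" and "M2 \<in> SO"
  shows "\<exists>J. compat_cs J \<and> circle_defined J M1 \<and> circle_defined J M2 \<and>
             circle_defined J (M1 ** M2) \<and> cocycle_defined J M1 M2"
proof -
  have "M1 ** M2 \<in> SO" using assms by (simp add: SO_def det_mul orthogonal_matrix_mul)
  then obtain R where R: "R \<in> SO" and inv: "\<forall>A\<in>{M1, M2, M1 ** M2}. invertible (Cm (rotated_J0 R) A)"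
    using exists_rotated_J0_Cm_invertible[of "{M1, M2, M1 ** M2}"] assms by auto
  have oR: "orthogonal_matrix R" using R by (simp add: SO_def)
  note J = compat_cs_rotated_J0[OF oR]
  note circle = circle_defined_if_Cm_invertible[OF rotated_J0_exists_std_basis[OF oR] J]
  have "cocycle_defined (rotated_J0 R) M1 M2"
    using inv assms(2) by (intro cocycle_defined_if_Cm_invertible[OF J]) (simp_all add: SO_def)
  then show ?thesis using J circle inv by blast
qed

end
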